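(* Let $R>0$, let $I\subset\mathbb{R}$ be an open interval and let $x,y\colon I\to\mathbb{R}$ be continuously differentiable with $r(t):=\sqrt{x(t)^2+y(t)^2}>R$ and $|x(t)-t|<r(t)-R$ for all $t\in I$. Put $g(t)=\dfrac{x(t)-t}{r(t)-R}$. Then for each $t\in I$ the compatibility condition $$\frac{d}{dt}\left(y(t)+\sqrt{\big(r(t)-R\big)^2-(x(t)-t)^2}\right)=\frac{x(t)-t}{\sqrt{\big(r(t)-R\big)^2-(x(t)-t)^2}}$$ holds if and only if $$\left(g(t)-\frac{x(t)}{r(t)}\right)x'(t)=\left(\sqrt{1-g(t)^2}+\frac{y(t)}{r(t)}\right)y'(t).$$
   Context: In the paper this is applied to the equidistant parameterization $x,y$ of a circle of radius $R$ centered at the origin and the epigraph of a positive, twice continuously differentiable convex function $f$, for which $f(t)=y(t)+\sqrt{(r(t)-R)^2-(x(t)-t)^2}$ and $f'(t)=(x(t)-t)/\sqrt{(r(t)-R)^2-(x(t)-t)^2}$; the compatibility condition expresses that the derivative of the first expression equals the second. *)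

theory Defs
  imports "HOL-Analysis.Analysis"
begin

end

(* Both sides are pointwise statements at t. With a = r t - R, b = x t - t and
   S = sqrt (a^2 - b^2) the chain rule gives the left derivative as
   y' + (a r' - b (x' - 1)) / S with r' = (x x' + y y') / r; multiplying the
   compatibility condition by S / a turns it into the stated linear relation
   between x' and y', since sqrt (1 - g^2) = S / a. *)

theory Submission
  imports Defs
begin

lemma has_real_derivative_sqrt_sum_squares:
  fixes x y :: "real \<Rightarrow> real"
  assumes "(x has_real_derivative x') (at t)" and "(y has_real_derivative y') (at t)"
    and "x t ^ 2 + y t ^ 2 > 0"
  shows "((\<lambda>s. sqrt (x s ^ 2 + y s ^ 2)) has_real_derivative
           (x t * x' + y t * y') / sqrt (x t ^ 2 + y t ^ 2)) (at t)"
proof -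
  have "x t ^ 2 + y t ^ 2 \<noteq> 0" using assms(3) by linarith
  with assms show ?thesis
    by (auto intro!: derivative_eq_intros simp: field_simps)
qed

lemma has_real_derivative_height:
  fixes x y r :: "real \<Rightarrow> real"
  assumes "(x has_real_derivative x') (at t)" and "(y has_real_derivative y') (at t)"
    and "(r has_real_derivative r') (at t)"
    and "\<bar>x t - t\<bar> < r t - R"
  shows "((\<lambda>s. y s + sqrt ((r s - R) ^ 2 - (x s - s) ^ 2)) has_real_derivative
           y' + ((r t - R) * r' - (x t - t) * (x' - 1)) / sqrt ((r t - R) ^ 2 - (x t - t) ^ 2)) (at t)"
proof -
  have "(x t - t) ^ 2 < (r t - R) ^ 2"
    using assms(4) power_strict_mono[of "\<bar>x t - t\<bar>" "r t - R" 2] by simp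
  with assms(1-3) show ?thesis
    by (auto intro!: derivative_eq_intros simp: field_simps)
qed

(* a = r t - R, b = x t - t, (p, q) = (x t, y t), (u, v) = (x' t, y' t), \<rho> = r t *)
lemma compatibility_condition_iff:
  fixes a b p q u v \<rho> :: real
  assumes ba: "\<bar>b\<bar> < a" and \<rho>_pos: "\<rho> > 0"
  shows "v + (a * ((p * u + q * v) / \<rho>) - b * (u - 1)) / sqrt (a ^ 2 - b ^ 2) = b / sqrt (a ^ 2 - b ^ 2)
     \<longleftrightarrow> (b / a - p / \<rho>) * u = (sqrt (1 - (b / a) ^ 2) + q / \<rho>) * v"
proof -
  define S where "S = sqrt (a ^ 2 - b ^ 2)"
  have a_pos: "a > 0" using ba by linarith
  have "b ^ 2 < a ^ 2" using ba power_strict_mono[of "\<bar>b\<bar>" a 2] by simp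
  then have S_pos: "S > 0" by (simp add: S_def)
  have "sqrt (1 - (b / a) ^ 2) = sqrt ((a ^ 2 - b ^ 2) / a ^ 2)"
    using a_pos by (simp add: field_simps power_divide)
  also have "\<dots> = S / a" using a_pos by (simp add: S_def real_sqrt_divide)
  finally have sqrt_eq: "sqrt (1 - (b / a) ^ 2) = S / a" .
  have "v + (a * ((p * u + q * v) / \<rho>) - b * (u - 1)) / S = b / S
      \<longleftrightarrow> v * S + a * ((p * u + q * v) / \<rho>) - b * u = 0"
    using S_pos by (simp add: field_simps)
  also have "v * S + a * ((p * u + q * v) / \<rho>) - b * u
      = a * (v * (S / a) + (p * u + q * v) / \<rho> - b / a * u)"
    using a_pos by (simp add: field_simps)
  also have "\<dots> = 0 \<longleftrightarrow> v * (S / a) + (p * u + q * v) / \<rho> - b / a * u = 0"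
    using a_pos by simp
  also have "\<dots> \<longleftrightarrow> (b / a - p / \<rho>) * u = (S / a + q / \<rho>) * v"
    by (simp add: add_divide_distrib algebra_simps) (auto simp: algebra_simps)
  finally show ?thesis
    unfolding sqrt_eq S_def .
qed

theorem theorem6:
  fixes R :: real and I :: "real set"
    and x y x' y' r g :: "real \<Rightarrow> real"
  assumes R_pos: "R > 0"
    and I_open: "open I" and I_interval: "is_interval I"
    and x_deriv: "\<And>t. t \<in> I \<Longrightarrow> (x has_real_derivative x' t) (at t)"
    and y_deriv: "\<And>t. t \<in> I \<Longrightarrow> (y has_real_derivative y' t) (at t)"
    and x'_cont: "continuous_on I x'"
    and y'_cont: "continuous_on I y'"
    and r_def: "r = (\<lambda>t. sqrt (x t ^ 2 + y t ^ 2))"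
    and r_gt: "\<And>t. t \<in> I \<Longrightarrow> r t > R"
    and x_close: "\<And>t. t \<in> I \<Longrightarrow> \<bar>x t - t\<bar> < r t - R"
    and g_def: "g = (\<lambda>t. (x t - t) / (r t - R))"
    and t_in: "t \<in> I"
  shows "deriv (\<lambda>s. y s + sqrt ((r s - R) ^ 2 - (x s - s) ^ 2)) t
           = (x t - t) / sqrt ((r t - R) ^ 2 - (x t - t) ^ 2)
         \<longleftrightarrow> (g t - x t / r t) * x' t = (sqrt (1 - g t ^ 2) + y t / r t) * y' t"
proof -
  have r_pos: "r t > 0" using r_gt[OF t_in] R_pos by linarith
  have r_deriv: "(r has_real_derivative (x t * x' t + y t * y' t) / r t) (at t)"
    using has_real_derivative_sqrt_sum_squares[OF x_deriv[OF t_in] y_deriv[OF t_in]] r_pos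
    unfolding r_def by simp
  from has_real_derivative_height[OF x_deriv[OF t_in] y_deriv[OF t_in] r_deriv x_close[OF t_in]]
  have "deriv (\<lambda>s. y s + sqrt ((r s - R) ^ 2 - (x s - s) ^ 2)) t
      = y' t + ((r t - R) * ((x t * x' t + y t * y' t) / r t) - (x t - t) * (x' t - 1))
               / sqrt ((r t - R) ^ 2 - (x t - t) ^ 2)"
    by (rule DERIV_imp_deriv)
  then show ?thesis
    using compatibility_condition_iff[OF x_close[OF t_in] r_pos] by (simp add: g_def)
qed

end
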